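(* Let $R$ be a $d\times d$ expansive integer matrix, $B\subset\mathbb{Z}^d$ finite with $0\in B$, $N:=|B|$, $L\subset\mathbb{Z}^d$ finite with $0\in L$, and $(\alpha_l)_{l\in L}$ complex numbers such that the matrix $\frac{1}{\sqrt N}\left(e^{2\pi i (R^T)^{-1}l\cdot b}\alpha_l\right)_{l\in L,b\in B}$ has orthonormal columns (equivalently, $\sum_{l\in L}|\alpha_l|^2|m_B((R^T)^{-1}(t-l))|^2=1$ for all $t\in\mathbb{R}^d$). Then for every $k\in\mathbb{N}$ the functions $$\left\{\alpha_{l_0}\cdots\alpha_{l_{k-1}}\,e_{l_0+R^Tl_1+\dots+(R^T)^{k-1}l_{k-1}} : l_0,\dots,l_{k-1}\in L\right\}$$ form a Parseval frame for $L^2(\nu_k)$, where $\nu_k=\frac{1}{N^k}\sum_{b_0,\dots,b_{k-1}\in B}\delta_{R^{-k}(b_0+Rb_1+\dots+R^{k-1}b_{k-1})}$.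
   Context: $e_\lambda(x)=e^{2\pi i\lambda\cdot x}$, $m_B(x)=\frac1N\sum_{b\in B}e^{2\pi ib\cdot x}$, $\delta_a$ is the Dirac measure at $a$. A Parseval frame $\{f_i\}$ of $H$ satisfies $\sum_i|\langle v,f_i\rangle|^2=\|v\|^2$ for all $v\in H$. A matrix is expansive if all eigenvalues have modulus $>1$. *)

theory Defs
  imports "HOL-Analysis.Analysis" "HOL-Library.FuncSet"
begin

primrec mpow :: "real^'n^'n \<Rightarrow> nat \<Rightarrow> real^'n^'n" where
  "mpow A 0 = mat 1"
| "mpow A (Suc k) = A ** mpow A k"

definition int_matrix :: "real^'n^'n \<Rightarrow> bool" where
  "int_matrix A \<longleftrightarrow> (\<forall>i j. A $ i $ j \<in> \<int>)"

definition int_vec :: "real^'n \<Rightarrow> bool" where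
  "int_vec v \<longleftrightarrow> (\<forall>i. v $ i \<in> \<int>)"

definition cmatrix :: "real^'n^'n \<Rightarrow> complex^'n^'n" where
  "cmatrix A = (\<chi> i j. complex_of_real (A $ i $ j))"

definition expansive :: "real^'n^'n \<Rightarrow> bool" where
  "expansive A \<longleftrightarrow>
     (\<forall>c::complex. (\<exists>v::complex^'n. v \<noteq> 0 \<and> cmatrix A *v v = c *s v) \<longrightarrow> 1 < cmod c)"

definition expo :: "real^'n \<Rightarrow> real^'n \<Rightarrow> complex" where
  "expo lam x = exp (2 * pi * \<i> * complex_of_real (lam \<bullet> x))"

definition hadamard_entry ::
  "real^'n^'n \<Rightarrow> (real^'n) set \<Rightarrow> (real^'n \<Rightarrow> complex) \<Rightarrow> real^'n \<Rightarrow> real^'n \<Rightarrow> complex" where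
  "hadamard_entry R B \<alpha> l b =
     expo (matrix_inv (transpose R) *v l) b * \<alpha> l / complex_of_real (sqrt (real (card B)))"

definition orthonormal_columns ::
  "real^'n^'n \<Rightarrow> (real^'n) set \<Rightarrow> (real^'n) set \<Rightarrow> (real^'n \<Rightarrow> complex) \<Rightarrow> bool" where
  "orthonormal_columns R B L \<alpha> \<longleftrightarrow>
     (\<forall>b\<in>B. \<forall>b'\<in>B.
        (\<Sum>l\<in>L. cnj (hadamard_entry R B \<alpha> l b) * hadamard_entry R B \<alpha> l b')
          = (if b = b' then 1 else 0))"

definition nu_point :: "real^'n^'n \<Rightarrow> nat \<Rightarrow> (nat \<Rightarrow> real^'n) \<Rightarrow> real^'n" where
  "nu_point R k b = matrix_inv (mpow R k) *v (\<Sum>j<k. mpow R j *v b j)"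

text \<open>Functions in L^2(nu_k) are represented by arbitrary functions R^d -> C (only their
  values on the finite support matter).\<close>
definition nu_inner ::
  "real^'n^'n \<Rightarrow> (real^'n) set \<Rightarrow> nat \<Rightarrow> (real^'n \<Rightarrow> complex) \<Rightarrow> (real^'n \<Rightarrow> complex) \<Rightarrow> complex" where
  "nu_inner R B k f g =
     (\<Sum>b\<in>Pi\<^sub>E {..<k} (\<lambda>_. B). f (nu_point R k b) * cnj (g (nu_point R k b)))
       / of_nat (card B ^ k)"

definition parseval_frame ::
  "(('a \<Rightarrow> complex) \<Rightarrow> ('a \<Rightarrow> complex) \<Rightarrow> complex) \<Rightarrow> 'i set \<Rightarrow> ('i \<Rightarrow> 'a \<Rightarrow> complex) \<Rightarrow> bool" where
  "parseval_frame ip I F \<longleftrightarrow>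
     (\<forall>v. (\<Sum>i\<in>I. (cmod (ip v (F i)))\<^sup>2) = Re (ip v v))"

definition frame_elem ::
  "real^'n^'n \<Rightarrow> (real^'n \<Rightarrow> complex) \<Rightarrow> nat \<Rightarrow> (nat \<Rightarrow> real^'n) \<Rightarrow> real^'n \<Rightarrow> complex" where
  "frame_elem R \<alpha> k l =
     (\<lambda>x. (\<Prod>j<k. \<alpha> (l j)) * expo (\<Sum>j<k. mpow (transpose R) j *v l j) x)"

end

theory Submission
  imports Defs
begin

text \<open>
  On the finite atomic measure \<open>\<nu>\<^sub>k\<close>, whose atoms \<open>x\<^sub>b\<close> are labelled by digit tuples b,
  the Parseval identity for a finite family F is equivalent to the kernel identity
  \<open>\<Sum>\<^sub>l cnj (F l x\<^sub>b) * F l x\<^sub>b\<^sub>' = N\<^sup>k\<close> if b = b' and 0 otherwise.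
  The frame elements are products of characters, so this kernel factors as
  \<open>\<Prod>\<^sub>j\<^sub><\<^sub>k W (R\<^sup>j (x\<^sub>b\<^sub>' - x\<^sub>b))\<close> where \<open>W y = \<Sum>\<^sub>l\<^sub>\<in>\<^sub>L |\<alpha> l|\<^sup>2 e\<^sub>l y\<close>.
  If b and b' first differ in digit i, then for j = k - 1 - i the vector \<open>R\<^sup>j (x\<^sub>b\<^sub>' - x\<^sub>b)\<close>
  is \<open>R\<^sup>-\<^sup>1 (b'\<^sub>i - b\<^sub>i)\<close> plus an integer vector; W is invariant under integer translations
  and vanishes at \<open>R\<^sup>-\<^sup>1 (b'\<^sub>i - b\<^sub>i)\<close> by the orthonormality of the columns, while for
  b = b' every factor equals N.
\<close>

lemma mpow_add: "mpow A (m + n) = mpow A m ** mpow A n"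
  by (induction m) (simp_all add: matrix_mul_assoc)

lemma mpow_Suc_right: "mpow A (Suc n) = mpow A n ** A"
  using mpow_add[of A n 1] by simp

lemma mpow_transpose: "mpow (transpose A) n = transpose (mpow A n)"
proof (induction n)
  case (Suc n)
  have "mpow (transpose A) (Suc n) = transpose (mpow A n ** A)"
    by (simp add: Suc matrix_transpose_mul)
  then show ?case
    by (simp only: mpow_Suc_right)
qed simp

lemma invertible_mpow: "invertible A \<Longrightarrow> invertible (mpow A n)"
proof (induction n)
  case 0
  have "mat 1 ** mat 1 = (mat 1 :: real^'a^'a)"
    by simp
  then show ?case
    unfolding invertible_def by auto
qed (simp add: invertible_mult)

lemma invertible_matrix_inv:
  assumes "invertible A"
  shows matrix_inv_right: "A ** matrix_inv A = mat 1"
    and matrix_inv_left: "matrix_inv A ** A = mat 1"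
  using someI_ex[OF assms[unfolded invertible_def]] unfolding matrix_inv_def by auto

lemma matrix_inv_transpose:
  fixes A :: "real^'n^'n"
  assumes "invertible A"
  shows "matrix_inv (transpose A) = transpose (matrix_inv A)"
proof -
  have "transpose (matrix_inv A) ** transpose A = mat 1"
    by (simp add: matrix_transpose_mul[symmetric] matrix_inv_right[OF assms])
  then have "matrix_inv (transpose A)
      = transpose (matrix_inv A) ** transpose A ** matrix_inv (transpose A)"
    by simp
  also have "\<dots> = transpose (matrix_inv A)"
    by (simp add: matrix_mul_assoc[symmetric] matrix_inv_right[OF transpose_invertible[OF assms]])
  finally show ?thesis .
qed

lemma expansive_imp_invertible:
  assumes "expansive (R::real^'n^'n)"
  shows "invertible R"
proof (rule ccontr)
  assume "\<not> invertible R"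
  then obtain x where x: "R *v x = 0" "x \<noteq> 0"
    unfolding invertible_left_inverse matrix_left_invertible_ker by blast
  define v where "v = (\<chi> i. complex_of_real (x $ i))"
  have "v \<noteq> 0"
    using x(2) by (auto simp: v_def vec_eq_iff)
  moreover have "cmatrix R *v v = 0 *s v"
    using x(1)
    by (simp add: vec_eq_iff cmatrix_def v_def matrix_vector_mult_def flip: of_real_mult of_real_sum)
  ultimately show False
    using assms unfolding expansive_def by force
qed

lemma int_matrix_mpow: "int_matrix A \<Longrightarrow> int_matrix (mpow A n)"
  by (induction n) (auto simp: int_matrix_def mat_def matrix_matrix_mult_def intro!: Ints_sum Ints_mult)

lemma int_vec_matrix_vector_mult: "int_matrix A \<Longrightarrow> int_vec v \<Longrightarrow> int_vec (A *v v)"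
  unfolding int_matrix_def int_vec_def matrix_vector_mult_def
  by (auto intro!: Ints_sum Ints_mult)

lemma int_vec_diff: "int_vec a \<Longrightarrow> int_vec b \<Longrightarrow> int_vec (a - b)"
  unfolding int_vec_def by auto

lemma int_vec_sum: "(\<And>i. i \<in> S \<Longrightarrow> int_vec (f i)) \<Longrightarrow> int_vec (sum f S)"
  unfolding int_vec_def by (auto simp: sum_component intro!: Ints_sum)

lemma inner_int_vec: "int_vec a \<Longrightarrow> int_vec b \<Longrightarrow> a \<bullet> b \<in> \<int>"
  unfolding int_vec_def inner_vec_def by (auto intro!: Ints_sum Ints_mult)

lemma expo_int: "l \<bullet> x \<in> \<int> \<Longrightarrow> expo l x = 1"
  by (auto simp: expo_def mult_ac elim!: Ints_cases intro: exp_eq_one_iff)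

lemma expo_add: "expo l (x + y) = expo l x * expo l y"
  unfolding expo_def by (simp add: inner_add_right distrib_left exp_add[symmetric])

lemma cnj_expo_mult: "cnj (expo l x) * expo l y = expo l (y - x)"
  unfolding expo_def by (simp add: exp_cnj inner_diff_right algebra_simps flip: exp_add)

lemma expo_sum_left: "expo (\<Sum>j\<in>S. f j) x = (\<Prod>j\<in>S. expo (f j) x)"
  by (induction S rule: infinite_finite_induct) (simp_all add: expo_def inner_add_left distrib_left exp_add)

lemma expo_vector_matrix_mult: "expo (l v* A) x = expo l (A *v x)"
  unfolding expo_def by (simp add: dot_lmul_matrix)

lemma parseval_frame_of_kernel:
  fixes X :: "'d \<Rightarrow> 'a" and F :: "'i \<Rightarrow> 'a \<Rightarrow> complex" and c :: real
  assumes "finite D" and "c \<noteq> 0"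
    and kernel: "\<And>b b'. b \<in> D \<Longrightarrow> b' \<in> D \<Longrightarrow>
      (\<Sum>i\<in>I. cnj (F i (X b)) * F i (X b')) = (if b = b' then of_real c else 0)"
  shows "parseval_frame (\<lambda>f g. (\<Sum>b\<in>D. f (X b) * cnj (g (X b))) / of_real c) I F"
  unfolding parseval_frame_def
proof
  fix v :: "'a \<Rightarrow> complex"
  let ?ip = "\<lambda>g. (\<Sum>b\<in>D. v (X b) * cnj (g (X b))) / of_real c"
  have "of_real (\<Sum>i\<in>I. (cmod (?ip (F i)))\<^sup>2) = (\<Sum>i\<in>I. ?ip (F i) * cnj (?ip (F i)))"
    by (simp only: of_real_sum complex_norm_square)
  also have "\<dots> = (\<Sum>i\<in>I. \<Sum>b\<in>D. \<Sum>b'\<in>D.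
      v (X b) * cnj (v (X b')) * (cnj (F i (X b)) * F i (X b'))) / of_real (c * c)"
    by (simp add: sum_product sum_divide_distrib cnj_sum mult_ac)
  also have "\<dots> = (\<Sum>b\<in>D. \<Sum>b'\<in>D.
      v (X b) * cnj (v (X b')) * (\<Sum>i\<in>I. cnj (F i (X b)) * F i (X b'))) / of_real (c * c)"
    by (simp add: sum_distrib_left sum.swap[of _ I] sum.swap[of _ I D])
  also have "\<dots> = (\<Sum>b\<in>D. v (X b) * cnj (v (X b)) * of_real c) / of_real (c * c)"
    using \<open>finite D\<close>
    by (intro arg_cong2[where f="(/)"] sum.cong refl)
      (simp add: kernel if_distrib[of "\<lambda>z. _ * z"] cong: if_cong)
  also have "\<dots> = ?ip v"
    using \<open>c \<noteq> 0\<close> by (simp add: sum_distrib_right[symmetric])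
  finally have norms: "of_real (\<Sum>i\<in>I. (cmod (?ip (F i)))\<^sup>2) = ?ip v" .
  then show "(\<Sum>i\<in>I. (cmod (?ip (F i)))\<^sup>2) = Re (?ip v)"
    by (simp only: flip: norms) simp
qed

definition weighted_char_sum :: "(real^'n) set \<Rightarrow> (real^'n \<Rightarrow> complex) \<Rightarrow> real^'n \<Rightarrow> complex" where
  "weighted_char_sum L \<alpha> x = (\<Sum>l\<in>L. cnj (\<alpha> l) * \<alpha> l * expo l x)"

lemma weighted_char_sum_add_int_vec:
  assumes "\<forall>l\<in>L. int_vec l" and "int_vec w"
  shows "weighted_char_sum L \<alpha> (x + w) = weighted_char_sum L \<alpha> x"
  unfolding weighted_char_sum_def using assms
  by (intro sum.cong refl) (simp add: expo_add expo_int inner_int_vec)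

lemma cnj_hadamard_entry_mult:
  "cnj (hadamard_entry R B \<alpha> l b) * hadamard_entry R B \<alpha> l b'
     = cnj (\<alpha> l) * \<alpha> l * expo (matrix_inv (transpose R) *v l) (b' - b) / of_nat (card B)"
proof -
  have "cnj (of_real (sqrt (card B))) * of_real (sqrt (card B)) = (of_nat (card B) :: complex)"
    by (simp flip: of_real_mult)
  then show ?thesis
    unfolding hadamard_entry_def by (simp add: cnj_expo_mult[symmetric] field_simps)
qed

lemma weighted_char_sum_orthonormal_columns:
  assumes "orthonormal_columns R B L \<alpha>" and "invertible R" and "finite B"
    and "b \<in> B" and "b' \<in> B"
  shows "weighted_char_sum L \<alpha> (matrix_inv R *v (b' - b))
    = (if b = b' then of_nat (card B) else 0)"
proof -
  have "card B \<noteq> 0"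
    using assms(3,4) by auto
  have "(\<Sum>l\<in>L. cnj (hadamard_entry R B \<alpha> l b) * hadamard_entry R B \<alpha> l b')
      = weighted_char_sum L \<alpha> (matrix_inv R *v (b' - b)) / of_nat (card B)"
    by (simp add: cnj_hadamard_entry_mult weighted_char_sum_def sum_divide_distrib
        matrix_inv_transpose[OF assms(2)] expo_vector_matrix_mult)
  with assms(1,4,5) \<open>card B \<noteq> 0\<close> show ?thesis
    unfolding orthonormal_columns_def by (auto split: if_splits)
qed

lemma frame_elem_kernel:
  assumes "finite L"
  shows "(\<Sum>l\<in>Pi\<^sub>E {..<k} (\<lambda>_. L). cnj (frame_elem R \<alpha> k l x) * frame_elem R \<alpha> k l y)
    = (\<Prod>j<k. weighted_char_sum L \<alpha> (mpow R j *v (y - x)))"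
proof -
  have "cnj (frame_elem R \<alpha> k l x) * frame_elem R \<alpha> k l y
      = (\<Prod>j<k. cnj (\<alpha> (l j)) * \<alpha> (l j) * expo (l j) (mpow R j *v (y - x)))" for l
  proof -
    have "cnj (frame_elem R \<alpha> k l x) * frame_elem R \<alpha> k l y = (\<Prod>j<k. cnj (\<alpha> (l j)) * \<alpha> (l j)
        * (cnj (expo (l j v* mpow R j) x) * expo (l j v* mpow R j) y))"
      by (simp add: frame_elem_def expo_sum_left mpow_transpose prod.distrib mult_ac)
    then show ?thesis
      by (simp add: cnj_expo_mult expo_vector_matrix_mult matrix_vector_mult_diff_distrib)
  qed
  then show ?thesis
    unfolding weighted_char_sum_def using assms by (simp add: prod_sum_PiE)
qed

lemma mpow_nu_point:
  assumes "invertible R"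
  shows "mpow R k *v nu_point R k b = (\<Sum>j<k. mpow R j *v b j)"
  unfolding nu_point_def
  by (simp add: matrix_vector_mul_assoc matrix_inv_right[OF invertible_mpow[OF assms]])

lemma mpow_add_Suc_mult: "mpow A (m + Suc n) *v v = mpow A m *v (A *v (mpow A n *v v))"
  by (simp only: mpow_add mpow.simps(2) matrix_vector_mul_assoc matrix_mul_assoc)

lemma sum_mpow_leading_digit:
  assumes "\<forall>i<m. d i = 0"
  shows "(\<Sum>i<m + Suc n. mpow R i *v d i)
    = mpow R m *v (d m + R *v (\<Sum>t<n. mpow R t *v d (m + Suc t)))"
proof (induction n)
  case 0
  have "(\<Sum>i<m. mpow R i *v d i) = 0"
    using assms by simp
  then show ?case
    by simp
next
  case (Suc n)
  have "(\<Sum>i<m + Suc (Suc n). mpow R i *v d i)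
      = (\<Sum>i<m + Suc n. mpow R i *v d i) + mpow R (m + Suc n) *v d (m + Suc n)"
    by (simp only: add_Suc_right sum.lessThan_Suc)
  then show ?case
    by (simp only: Suc mpow_add_Suc_mult sum.lessThan_Suc matrix_vector_right_distrib add.assoc)
qed

lemma mpow_nu_point_diff:
  assumes "invertible R" and "i < k" and "\<forall>j<i. b j = b' j"
  shows "mpow R (k - Suc i) *v (nu_point R k b' - nu_point R k b)
    = matrix_inv R *v (b' i - b i) + (\<Sum>t<k - Suc i. mpow R t *v (b' (i + Suc t) - b (i + Suc t)))"
    (is "mpow R ?n *v ?y = matrix_inv R *v ?d + ?w")
proof -
  have k: "k = i + Suc ?n"
    using assms(2) by simp
  have "mpow R i *v (R *v (mpow R ?n *v ?y)) = mpow R k *v ?y"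
    by (subst (2) k) (simp only: mpow_add_Suc_mult)
  also have "\<dots> = (\<Sum>j<k. mpow R j *v (b' j - b j))"
    by (simp add: matrix_vector_mult_diff_distrib mpow_nu_point[OF assms(1)] sum_subtractf)
  also have "\<dots> = mpow R i *v (?d + R *v ?w)"
    using assms(3) by (subst k) (subst sum_mpow_leading_digit, auto)
  finally have "R *v (mpow R ?n *v ?y) = ?d + R *v ?w"
    using inj_matrix_vector_mult[OF invertible_mpow[OF assms(1)]] by (auto dest: injD)
  then have "matrix_inv R *v (R *v (mpow R ?n *v ?y)) = matrix_inv R *v ?d + ?w"
    by (simp add: matrix_vector_right_distrib matrix_vector_mul_assoc matrix_inv_left[OF assms(1)])
  then show ?thesis
    by (simp add: matrix_vector_mul_assoc matrix_mul_assoc matrix_inv_left[OF assms(1)])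
qed

lemma prod_weighted_char_sum_nu_point_diff:
  assumes "int_matrix R" and "invertible R" and "orthonormal_columns R B L \<alpha>"
    and "finite B" and "\<forall>b\<in>B. int_vec b" and "\<forall>l\<in>L. int_vec l"
    and b: "b \<in> Pi\<^sub>E {..<k} (\<lambda>_. B)" and b': "b' \<in> Pi\<^sub>E {..<k} (\<lambda>_. B)"
  shows "(\<Prod>j<k. weighted_char_sum L \<alpha> (mpow R j *v (nu_point R k b' - nu_point R k b)))
    = (if b = b' then of_nat (card B ^ k) else 0)"
proof (cases "b = b'")
  case True
  have "weighted_char_sum L \<alpha> 0 = of_nat (card B)" if "j < k" for j
    using weighted_char_sum_orthonormal_columns[OF assms(3,2,4), of "b j" "b j"] b that by auto
  with True show ?thesis
    by simp
next
  case False
  then have "\<exists>i. b i \<noteq> b' i"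
    by auto
  then obtain i where i: "b i \<noteq> b' i" and below: "\<forall>j<i. b j = b' j"
    unfolding exists_least_iff[of "\<lambda>i. b i \<noteq> b' i"] by blast
  with b b' have "i < k"
    by (metis PiE_arb lessThan_iff not_less)
  define w where "w = (\<Sum>t<k - Suc i. mpow R t *v (b' (i + Suc t) - b (i + Suc t)))"
  have "int_vec w"
    unfolding w_def using assms(1,5) b b'
    by (intro int_vec_sum int_vec_matrix_vector_mult int_matrix_mpow int_vec_diff) auto
  have "weighted_char_sum L \<alpha> (mpow R (k - Suc i) *v (nu_point R k b' - nu_point R k b))
      = weighted_char_sum L \<alpha> (matrix_inv R *v (b' i - b i))"
    using mpow_nu_point_diff[OF assms(2) \<open>i < k\<close> below]
      weighted_char_sum_add_int_vec[OF assms(6) \<open>int_vec w\<close>]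
    by (simp add: w_def)
  also have "\<dots> = 0"
    using weighted_char_sum_orthonormal_columns[OF assms(3,2,4) PiE_mem[OF b] PiE_mem[OF b']]
      i \<open>i < k\<close>
    by auto
  finally show ?thesis
    using False \<open>i < k\<close> by (auto intro: prod_zero)
qed

theorem proposition3p7:
  fixes R :: "real^'n^'n" and B L :: "(real^'n) set" and \<alpha> :: "real^'n \<Rightarrow> complex"
  assumes "int_matrix R" and "expansive R"
    and "finite B" and "0 \<in> B" and "\<forall>b\<in>B. int_vec b"
    and "finite L" and "0 \<in> L" and "\<forall>l\<in>L. int_vec l"
    and "orthonormal_columns R B L \<alpha>"
  shows "\<forall>k::nat. parseval_frame (nu_inner R B k) (Pi\<^sub>E {..<k} (\<lambda>_. L)) (frame_elem R \<alpha> k)"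
proof
  fix k
  have "invertible R"
    using assms(2) by (rule expansive_imp_invertible)
  have "card B ^ k \<noteq> 0"
    using assms(3,4) by auto
  have nu_inner: "nu_inner R B k = (\<lambda>f g.
      (\<Sum>b\<in>Pi\<^sub>E {..<k} (\<lambda>_. B). f (nu_point R k b) * cnj (g (nu_point R k b)))
        / of_real (real (card B ^ k)))"
    unfolding nu_inner_def by (simp only: of_real_of_nat_eq)
  show "parseval_frame (nu_inner R B k) (Pi\<^sub>E {..<k} (\<lambda>_. L)) (frame_elem R \<alpha> k)"
    unfolding nu_inner using \<open>card B ^ k \<noteq> 0\<close> assms(3,6)
    by (intro parseval_frame_of_kernel)
      (simp_all add: finite_PiE frame_elem_kernel
        prod_weighted_char_sum_nu_point_diff[OF assms(1) \<open>invertible R\<close> assms(9,3,5,8)])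
qed

end
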